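(* Let $q$ be a prime power, $s,\ell$ positive integers, $\alpha,\beta\in\mathbb{F}_q^*$, let $r$ be the multiplicative order of $\beta$, and assume $q\equiv 1\pmod{r\ell}$. Let $\omega\in\mathbb{F}_q$ be a primitive $r\ell$-th root of unity with $\omega^\ell=\beta$, and for $k=0,\dots,\ell-1$ let $\eta_k(y)=\prod_{j\ne k,\,0\le j\le \ell-1}\frac{y-\omega^{1+jr}}{\omega^{1+kr}-\omega^{1+jr}}$. Let $\mathcal{C}$ be an ideal of $\mathcal{R}=\mathbb{F}_q[x,y]/\langle x^s-\alpha,y^\ell-\beta\rangle$, let $I_j=\{f(x)\in\mathbb{F}_q[x]/\langle x^s-\alpha\rangle:\eta_j(y)f(x)\in\mathcal{C}\}$, let $p_j(x)$ be the unique monic divisor of $x^s-\alpha$ generating $I_j$, and let $a_j=\deg p_j(x)$, for $j=0,\dots,\ell-1$. Then the elements $$x^i p_j(x)\eta_j(y),\qquad 0\le j\le \ell-1,\ \ 0\le i\le s-a_j-1,$$ form a basis of $\mathcal{C}$ over $\mathbb{F}_q$, i.e. the matrix whose rows are (the coefficient vectors of) these elements, ordered by $j$ and then by $i$, is a generator matrix of $\mathcal{C}$.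
   Context: An element $\sum_{i,j}c_{i,j}x^iy^j$ of $\mathcal{R}$ (with $0\le i\le s-1$, $0\le j\le \ell-1$) is identified with the $s\times\ell$ array $(c_{i,j})$, i.e. a vector of length $s\ell$ over $\mathbb{F}_q$; ideals of $\mathcal{R}$ are two-dimensional $(\alpha,\beta)$-constacyclic codes. *)

theory Defs
  imports "HOL-Computational_Algebra.Polynomial" "HOL-Library.Cardinality"
begin

text \<open>Elements of R = F[x,y]/<x^s - alpha, y^l - beta> are represented by their
  reduced representatives: bivariate polynomials as polynomials in y whose
  coefficients are polynomials in x (type 'a poly poly), with y-degree < l
  and every x-degree < s.\<close>

definition mult_order :: "'a::field \<Rightarrow> nat" where
  "mult_order b = (LEAST n. 0 < n \<and> b ^ n = 1)"

definition primitive_root_of_unity :: "nat \<Rightarrow> 'a::field \<Rightarrow> bool" where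
  "primitive_root_of_unity n w \<longleftrightarrow> w ^ n = 1 \<and> (\<forall>k. 0 < k \<and> k < n \<longrightarrow> w ^ k \<noteq> 1)"

definition xmod :: "nat \<Rightarrow> 'a::field \<Rightarrow> 'a poly" where
  "xmod s a = monom 1 s - [:a:]"

definition Rset :: "nat \<Rightarrow> nat \<Rightarrow> 'a::field poly poly set" where
  "Rset s l = {f. degree f < l \<and> (\<forall>k. degree (coeff f k) < s)}"

definition red :: "nat \<Rightarrow> nat \<Rightarrow> 'a::field \<Rightarrow> 'a \<Rightarrow> 'a poly poly \<Rightarrow> 'a poly poly" where
  "red s l a b f = (\<Sum>k\<le>degree f.
      monom (smult (b ^ (k div l)) (coeff f k) mod xmod s a) (k mod l))"

definition is_R_ideal :: "nat \<Rightarrow> nat \<Rightarrow> 'a::field \<Rightarrow> 'a \<Rightarrow> 'a poly poly set \<Rightarrow> bool" where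
  "is_R_ideal s l a b C \<longleftrightarrow> C \<subseteq> Rset s l \<and> 0 \<in> C \<and>
     (\<forall>f\<in>C. \<forall>g\<in>C. f + g \<in> C) \<and>
     (\<forall>g\<in>Rset s l. \<forall>f\<in>C. red s l a b (g * f) \<in> C)"

definition ypoly :: "'a::zero poly \<Rightarrow> 'a poly poly" where
  "ypoly p = map_poly (\<lambda>c. [:c:]) p"

definition xpoly :: "'a::zero poly \<Rightarrow> 'a poly poly" where
  "xpoly f = [:f:]"

definition eta :: "'a::field \<Rightarrow> nat \<Rightarrow> nat \<Rightarrow> nat \<Rightarrow> 'a poly" where
  "eta w r l k = (\<Prod>j\<in>{0..<l} - {k}.
      smult (1 / (w ^ (1 + k * r) - w ^ (1 + j * r))) [:- (w ^ (1 + j * r)), 1:])"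

definition Iset :: "nat \<Rightarrow> nat \<Rightarrow> 'a::field \<Rightarrow> 'a \<Rightarrow> 'a \<Rightarrow> nat \<Rightarrow> 'a poly poly set \<Rightarrow> nat \<Rightarrow> 'a poly set" where
  "Iset s l a b w r C j = {f. degree f < s \<and> red s l a b (ypoly (eta w r l j) * xpoly f) \<in> C}"

end

theory Submission imports Defs begin

text \<open>Substituting \<open>y := \<theta>\<^sub>k = \<omega>\<^bsup>1+kr\<^esup>\<close> (\<open>k < l\<close>), the \<open>l\<close> distinct roots of
  \<open>y\<^sup>l - \<beta>\<close>, gives ring maps \<open>R \<rightarrow> F[x]/(x\<^sup>s - \<alpha>)\<close>, the \<open>k\<close>-th of which sends \<open>\<eta>\<^sub>j\<close>
  to \<open>\<delta>\<^sub>j\<^sub>k\<close>; by Lagrange interpolation in \<open>y\<close> they are jointly injective on \<open>R\<close>.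
  The \<open>k\<close>-th image of any \<open>f \<in> C\<close> lies in \<open>I\<^sub>k\<close>, so it is a multiple of \<open>p\<^sub>k\<close> of degree
  \<open>< s\<close>, i.e. a unique combination of the \<open>x\<^sup>i p\<^sub>k\<close> with \<open>i < s - a\<^sub>k\<close>. As
  \<open>x\<^sup>i p\<^sub>j \<eta>\<^sub>j\<close> is sent to \<open>x\<^sup>i p\<^sub>j\<close> by the \<open>j\<close>-th map and to \<open>0\<close> by the others, this gives
  both independence and spanning.\<close>

definition eval_y :: "'a::field poly \<Rightarrow> 'a \<Rightarrow> 'a poly poly \<Rightarrow> 'a poly" where
  "eval_y M t F = poly F [:t:] mod M"

lemma eval_y_0 [simp]: "eval_y M t 0 = 0"
  by (simp add: eval_y_def)

lemma eval_y_add: "eval_y M t (F + G) = eval_y M t F + eval_y M t G"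
  by (simp add: eval_y_def poly_mod_add_left)

lemma eval_y_diff: "eval_y M t (F - G) = eval_y M t F - eval_y M t G"
  by (simp add: eval_y_def poly_mod_diff_left)

lemma eval_y_mult: "eval_y M t (F * G) = (eval_y M t F * eval_y M t G) mod M"
  by (simp add: eval_y_def mod_mult_eq)

lemma eval_y_smult_const: "eval_y M t (smult [:c:] F) = smult c (eval_y M t F)"
  by (simp add: eval_y_def mod_smult_left)

lemma eval_y_sum: "eval_y M t (\<Sum>i\<in>A. F i) = (\<Sum>i\<in>A. eval_y M t (F i))"
  by (induction A rule: infinite_finite_induct) (auto simp: eval_y_add)

lemma eval_y_mod: "eval_y M t F mod M = eval_y M t F"
  by (simp add: eval_y_def)

lemma eval_y_xpoly: "eval_y M t (xpoly f) = f mod M"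
  by (simp add: eval_y_def xpoly_def)

lemma poly_ypoly_const: "poly (ypoly e) [:t:] = [:poly e t:]"
  unfolding ypoly_def by (induction e) (auto simp: map_poly_pCons algebra_simps)

lemma eval_y_ypoly: "eval_y M t (ypoly e) = [:poly e t:] mod M"
  by (simp add: eval_y_def poly_ypoly_const)

lemma coeff_poly_const: "coeff (poly G [:t:]) m = poly (map_poly (\<lambda>c. coeff c m) G) t"
  by (induction G) (auto simp: map_poly_pCons algebra_simps)

lemma eval_y_red:
  assumes "t ^ l = b" "0 < l"
  shows "eval_y (xmod s a) t (red s l a b F) = eval_y (xmod s a) t F"
proof -
  let ?M = "xmod s a"
  have "eval_y ?M t (red s l a b F) =
      (\<Sum>k\<le>degree F. (smult (b ^ (k div l)) (coeff F k) mod ?M) * [:t:] ^ (k mod l)) mod ?M"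
    by (simp add: eval_y_def red_def poly_sum poly_monom)
  also have "\<dots> = (\<Sum>k\<le>degree F. ((smult (b ^ (k div l)) (coeff F k) mod ?M) * [:t:] ^ (k mod l)) mod ?M) mod ?M"
    by (simp add: mod_sum_eq)
  also have "\<dots> = (\<Sum>k\<le>degree F. (smult (b ^ (k div l)) (coeff F k) * [:t:] ^ (k mod l)) mod ?M) mod ?M"
    by (simp add: mod_mult_left_eq)
  also have "\<dots> = (\<Sum>k\<le>degree F. smult (b ^ (k div l)) (coeff F k) * [:t:] ^ (k mod l)) mod ?M"
    by (simp add: mod_sum_eq)
  also have "(\<Sum>k\<le>degree F. smult (b ^ (k div l)) (coeff F k) * [:t:] ^ (k mod l))
      = (\<Sum>k\<le>degree F. coeff F k * [:t:] ^ k)"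
  proof (rule sum.cong[OF refl])
    fix k
    have "t ^ k = b ^ (k div l) * t ^ (k mod l)"
      using assms by (metis div_mult_mod_eq power_add power_mult mult.commute)
    then show "smult (b ^ (k div l)) (coeff F k) * [:t:] ^ (k mod l) = coeff F k * [:t:] ^ k"
      by (simp add: poly_const_pow mult_ac)
  qed
  finally show ?thesis
    by (simp add: eval_y_def poly_altdef)
qed

lemma degree_xmod: "0 < s \<Longrightarrow> degree (xmod s a) = s"
  unfolding xmod_def diff_conv_add_uminus by (subst degree_add_eq_left) (auto simp: degree_monom_eq)

lemma xmod_nonzero: "0 < s \<Longrightarrow> xmod s a \<noteq> 0"
  using degree_xmod[of s a] by auto

lemma degree_mod_xmod: "0 < s \<Longrightarrow> degree (f mod xmod s a) < s"
  using degree_mod_less[OF xmod_nonzero, of s f a] degree_xmod[of s a] by auto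

lemma mod_xmod_eq_self: "0 < s \<Longrightarrow> degree f < s \<Longrightarrow> f mod xmod s a = f"
  by (simp add: mod_poly_less degree_xmod)

lemma Rset_0: "0 < l \<Longrightarrow> 0 < s \<Longrightarrow> 0 \<in> Rset s l"
  by (simp add: Rset_def)

lemma Rset_add: "F \<in> Rset s l \<Longrightarrow> G \<in> Rset s l \<Longrightarrow> F + G \<in> Rset s l"
  unfolding Rset_def by (auto intro: le_less_trans[OF degree_add_le_max])

lemma Rset_diff: "F \<in> Rset s l \<Longrightarrow> G \<in> Rset s l \<Longrightarrow> F - G \<in> Rset s l"
  unfolding Rset_def by (auto intro: le_less_trans[OF degree_diff_le_max])

lemma Rset_smult_const: "F \<in> Rset s l \<Longrightarrow> smult [:c:] F \<in> Rset s l"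
  unfolding Rset_def
  by (auto intro: le_less_trans[OF degree_smult_le] le_less_trans[OF degree_mult_le])

lemma Rset_sum:
  "0 < l \<Longrightarrow> 0 < s \<Longrightarrow> (\<And>i. i \<in> A \<Longrightarrow> F i \<in> Rset s l) \<Longrightarrow> (\<Sum>i\<in>A. F i) \<in> Rset s l"
  by (induction A rule: infinite_finite_induct) (auto simp: Rset_0 Rset_add)

lemma Rset_monom: "n < l \<Longrightarrow> degree c < s \<Longrightarrow> monom c n \<in> Rset s l"
  unfolding Rset_def by (auto simp: coeff_monom intro: le_less_trans[OF degree_monom_le])

lemma red_in_Rset: "0 < l \<Longrightarrow> 0 < s \<Longrightarrow> red s l a b F \<in> Rset s l"
  unfolding red_def by (intro Rset_sum Rset_monom) (auto simp: degree_mod_xmod)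

lemma ypoly_in_Rset: "degree e < l \<Longrightarrow> 0 < s \<Longrightarrow> ypoly e \<in> Rset s l"
  unfolding Rset_def ypoly_def
  by (auto intro: le_less_trans[OF map_poly_degree_leq] simp: coeff_map_poly)

lemma eval_y_Rset:
  assumes "G \<in> Rset s l" "0 < s"
  shows "eval_y (xmod s a) t G = poly G [:t:]"
proof -
  have "map_poly (\<lambda>c. coeff c m) G = 0" if "s \<le> m" for m
  proof (rule poly_eqI)
    fix n
    have "degree (coeff G n) < m"
      using assms(1) that unfolding Rset_def by (auto intro: order.strict_trans2)
    then show "coeff (map_poly (\<lambda>c. coeff c m) G) n = coeff 0 n"
      by (simp add: coeff_map_poly coeff_eq_0)
  qed
  then have "degree (poly G [:t:]) \<le> s - 1"
    using assms(2) by (intro degree_le) (auto simp: coeff_poly_const)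
  then have "degree (poly G [:t:]) < s"
    using assms(2) by linarith
  then show ?thesis
    unfolding eval_y_def by (simp add: mod_xmod_eq_self assms(2))
qed

text \<open>For each \<open>x\<close>-degree \<open>m\<close>, the coefficients of \<open>x\<^sup>m\<close> form a polynomial in \<open>y\<close> of degree
  \<open>< l\<close> vanishing at the \<open>l\<close> points \<open>\<theta> k\<close>.\<close>
lemma Rset_eq_zero_if_eval_y_zero:
  assumes "G \<in> Rset s l" "0 < s" "inj_on \<theta> {..<l}"
    and "\<And>k. k < l \<Longrightarrow> eval_y (xmod s a) (\<theta> k) G = 0"
  shows "G = 0"
proof -
  have "coeff (coeff G k) m = 0" for k m
  proof -
    let ?Q = "map_poly (\<lambda>c. coeff c m) G"
    have "degree ?Q < card (\<theta> ` {..<l})"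
      using assms(1) map_poly_degree_leq[of "\<lambda>c. coeff c m" G]
      unfolding Rset_def card_image[OF assms(3)] by simp
    moreover have "poly ?Q x = 0" if "x \<in> \<theta> ` {..<l}" for x
      using that assms(4) eval_y_Rset[OF assms(1,2)] coeff_poly_const[of G x m]
      by (metis coeff_0 imageE lessThan_iff)
    ultimately have "?Q = 0"
      by (intro poly_eqI_degree[where A = "\<theta> ` {..<l}"]) auto
    then show ?thesis
      by (metis coeff_0 coeff_map_poly)
  qed
  then show ?thesis
    by (metis leading_coeff_0_iff)
qed

lemma Rset_eqI_eval_y:
  assumes "F \<in> Rset s l" "G \<in> Rset s l" "0 < s" "inj_on \<theta> {..<l}"
    and "\<And>k. k < l \<Longrightarrow> eval_y (xmod s a) (\<theta> k) F = eval_y (xmod s a) (\<theta> k) G"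
  shows "F = G"
proof -
  have "F - G = 0"
    using assms(5) by (intro Rset_eq_zero_if_eval_y_zero[OF Rset_diff[OF assms(1,2)] assms(3,4)])
      (simp add: eval_y_diff)
  then show ?thesis by simp
qed

lemma mult_order_pos:
  fixes b :: "'a::{finite,field}"
  assumes "b \<noteq> 0"
  shows "0 < mult_order b"
proof -
  have "\<not> inj (\<lambda>n::nat. b ^ n)"
    using finite range_inj_infinite by blast
  then obtain i j :: nat where "i < j" "b ^ i = b ^ j"
    unfolding inj_def by (metis linorder_neqE_nat)
  then have "b ^ (j - i) = 1" "0 < j - i"
    using assms by (auto simp: power_diff)
  then show ?thesis
    unfolding mult_order_def by (metis (mono_tags, lifting) LeastI_ex)
qed

lemma inj_on_primitive_root_powers:
  fixes w :: "'a::field"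
  assumes "0 < r" "primitive_root_of_unity (r * l) w"
  shows "inj_on (\<lambda>j. w ^ (1 + j * r)) {..<l}"
proof -
  have False if "i < j" "j < l" "w ^ (1 + i * r) = w ^ (1 + j * r)" for i j
  proof -
    have w_nonzero: "w \<noteq> 0"
      using assms that(2) by (auto simp: primitive_root_of_unity_def power_0_left)
    have "w ^ (1 + j * r) = w ^ (1 + i * r) * w ^ ((j - i) * r)"
      using \<open>i < j\<close> by (simp add: power_add[symmetric] algebra_simps)
    then have "w ^ ((j - i) * r) = 1"
      using that(3) w_nonzero by simp
    moreover have "0 < (j - i) * r" "(j - i) * r < r * l"
      using that assms(1) by auto
    ultimately show False
      using assms(2) unfolding primitive_root_of_unity_def by blast
  qed
  then show ?thesis
    by (intro inj_onI) (metis lessThan_iff linorder_neqE_nat)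
qed

lemma primitive_root_power_pow:
  assumes "primitive_root_of_unity (r * l) w" "w ^ l = b"
  shows "(w ^ (1 + j * r)) ^ l = b"
proof -
  have "(w ^ (1 + j * r)) ^ l = w ^ l * (w ^ (r * l)) ^ j"
    by (simp add: power_mult[symmetric] power_add[symmetric] algebra_simps)
  then show ?thesis
    using assms unfolding primitive_root_of_unity_def by simp
qed

lemma poly_eta:
  fixes w :: "'a::field"
  assumes "inj_on (\<lambda>j. w ^ (1 + j * r)) {..<l}" "k < l" "j < l"
  shows "poly (eta w r l k) (w ^ (1 + j * r)) = (if j = k then 1 else 0)"
proof (cases "j = k")
  case True
  have factor_at_node: "poly (smult (1 / (A - B)) [:- B, 1:]) A = 1" if "A \<noteq> B" for A B :: 'a
    using that by (simp add: divide_simps)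
  have "poly (eta w r l k) (w ^ (1 + k * r)) = 1"
    unfolding eta_def poly_prod
  proof (intro prod.neutral ballI factor_at_node)
    fix i assume "i \<in> {0..<l} - {k}"
    then show "w ^ (1 + k * r) \<noteq> w ^ (1 + i * r)"
      using assms(1,2) unfolding inj_on_def by auto
  qed
  then show ?thesis
    using True by simp
next
  case False
  then show ?thesis
    using assms(3) unfolding eta_def poly_prod if_not_P[OF False]
    by (intro prod_zero bexI[of _ j]) auto
qed

lemma degree_eta: "k < l \<Longrightarrow> degree (eta w r l k) < l"
proof -
  assume "k < l"
  have "degree (smult c [:- a, 1:]) \<le> 1" for c a :: 'a
    using degree_smult_le[of c "[:- a, 1:]"] by simp
  then have "degree (eta w r l k) \<le> (\<Sum>i\<in>{0..<l} - {k}. 1)"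
    unfolding eta_def by (intro order.trans[OF degree_prod_sum_le] sum_mono) auto
  also have "\<dots> = l - 1"
    using \<open>k < l\<close> by simp
  finally show ?thesis
    using \<open>k < l\<close> by linarith
qed

lemma poly_eq_sum_monom:
  "(\<And>i. n \<le> i \<Longrightarrow> coeff h i = 0) \<Longrightarrow> (\<Sum>i<n. monom (coeff h i) i) = h"
  by (intro poly_eqI) (auto simp: coeff_sum coeff_monom)

locale constacyclic_ideal =
  fixes s l r :: nat and \<alpha> \<beta> \<omega> :: "'a::field"
    and C :: "'a poly poly set" and p :: "nat \<Rightarrow> 'a poly"
  assumes s_pos: "0 < s" and l_pos: "0 < l" and r_pos: "0 < r"
    and primitive: "primitive_root_of_unity (r * l) \<omega>" and \<omega>_pow: "\<omega> ^ l = \<beta>"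
    and ideal: "is_R_ideal s l \<alpha> \<beta> C"
    and p_monic: "\<And>j. j < l \<Longrightarrow> lead_coeff (p j) = 1"
    and p_dvd: "\<And>j. j < l \<Longrightarrow> p j dvd xmod s \<alpha>"
    and Iset_eq: "\<And>j. j < l \<Longrightarrow> Iset s l \<alpha> \<beta> \<omega> r C j = {(g * p j) mod xmod s \<alpha> | g. True}"
begin

definition node :: "nat \<Rightarrow> 'a" where
  "node k = \<omega> ^ (1 + k * r)"

abbreviation ev :: "nat \<Rightarrow> 'a poly poly \<Rightarrow> 'a poly" where
  "ev k \<equiv> eval_y (xmod s \<alpha>) (node k)"

definition basis :: "nat \<times> nat \<Rightarrow> 'a poly poly" where
  "basis = (\<lambda>(j, i). red s l \<alpha> \<beta> (xpoly (monom 1 i * p j) * ypoly (eta \<omega> r l j)))"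

definition basis_idx :: "(nat \<times> nat) set" where
  "basis_idx = {(j, i). j < l \<and> i < s - degree (p j)}"

lemma node_inj: "inj_on node {..<l}"
  unfolding node_def by (rule inj_on_primitive_root_powers[OF r_pos primitive])

lemma ev_red: "ev k (red s l \<alpha> \<beta> F) = ev k F"
  unfolding node_def by (rule eval_y_red[OF primitive_root_power_pow[OF primitive \<omega>_pow] l_pos])

lemma ev_eta: "j < l \<Longrightarrow> k < l \<Longrightarrow> ev k (ypoly (eta \<omega> r l j)) = (if j = k then 1 else 0)"
  using poly_eta[OF node_inj[unfolded node_def]]
  by (auto simp add: eval_y_ypoly node_def mod_xmod_eq_self s_pos)

lemma Rset_eqI_ev:
  "F \<in> Rset s l \<Longrightarrow> G \<in> Rset s l \<Longrightarrow> (\<And>k. k < l \<Longrightarrow> ev k F = ev k G) \<Longrightarrow> F = G"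
  by (rule Rset_eqI_eval_y[OF _ _ s_pos node_inj])

lemma p_nonzero: "j < l \<Longrightarrow> p j \<noteq> 0"
  using p_monic by fastforce

lemma degree_monom_mult_p:
  "j < l \<Longrightarrow> i < s - degree (p j) \<Longrightarrow> degree (monom 1 i * p j) < s"
  using p_nonzero by (subst degree_mult_eq) (auto simp: degree_monom_eq)

lemma ev_basis:
  assumes "j < l" "i < s - degree (p j)" "k < l"
  shows "ev k (basis (j, i)) = (if j = k then monom 1 i * p j else 0)"
  using assms mod_xmod_eq_self[OF s_pos degree_monom_mult_p[OF assms(1,2)]]
  by (auto simp: basis_def ev_red eval_y_mult eval_y_xpoly ev_eta)

lemma ev_basis_combination:
  assumes "k < l"
  shows "ev k (\<Sum>ji\<in>basis_idx. smult [:c ji:] (basis ji)) =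
    (\<Sum>i<s - degree (p k). monom (c (k, i)) i) * p k"
proof -
  have "basis_idx = Sigma {..<l} (\<lambda>j. {..<s - degree (p j)})"
    unfolding basis_idx_def by auto
  then have "ev k (\<Sum>ji\<in>basis_idx. smult [:c ji:] (basis ji)) =
      (\<Sum>j<l. \<Sum>i<s - degree (p j). smult (c (j, i)) (ev k (basis (j, i))))"
    by (simp add: eval_y_sum eval_y_smult_const sum.Sigma)
  also have "\<dots> = (\<Sum>j<l. if j = k
      then (\<Sum>i<s - degree (p j). smult (c (j, i)) (monom 1 i * p j)) else 0)"
    by (rule sum.cong[OF refl]) (auto simp: ev_basis assms)
  also have "\<dots> = (\<Sum>i<s - degree (p k). smult (c (k, i)) (monom 1 i * p k))"
    using assms by simp
  finally show ?thesis
    by (simp add: smult_monom_mult sum_distrib_right)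
qed

lemma basis_in_ideal: "ji \<in> basis_idx \<Longrightarrow> basis ji \<in> C"
proof -
  assume "ji \<in> basis_idx"
  then obtain j i where ji: "ji = (j, i)" "j < l" "i < s - degree (p j)"
    unfolding basis_idx_def by auto
  let ?g = "monom 1 i * p j"
  have "?g = ?g mod xmod s \<alpha>"
    using mod_xmod_eq_self[OF s_pos degree_monom_mult_p[OF ji(2,3)]] by simp
  then have "?g \<in> Iset s l \<alpha> \<beta> \<omega> r C j"
    using Iset_eq[OF ji(2)] by blast
  then show "basis ji \<in> C"
    unfolding Iset_def basis_def ji(1) by (simp add: mult.commute)
qed

lemma basis_independent:
  assumes "(\<Sum>ji\<in>basis_idx. smult [:c ji:] (basis ji)) = 0" "ji \<in> basis_idx"
  shows "c ji = 0"
proof -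
  obtain j i where ji: "ji = (j, i)" "j < l" "i < s - degree (p j)"
    using assms(2) unfolding basis_idx_def by auto
  have "(\<Sum>i<s - degree (p j). monom (c (j, i)) i) * p j = 0"
    using ev_basis_combination[OF ji(2), of c] assms(1) by simp
  then have "coeff (\<Sum>i<s - degree (p j). monom (c (j, i)) i) i = 0"
    using p_nonzero[OF ji(2)] by simp
  then show ?thesis
    using ji by (simp add: coeff_sum coeff_monom)
qed

text \<open>\<open>\<eta>\<^sub>k f \<in> C\<close> and \<open>\<eta>\<^sub>k\<close> times the \<open>k\<close>-th image of \<open>f\<close> have the same image under
  every evaluation, hence coincide in \<open>R\<close>.\<close>
lemma ev_in_Iset:
  assumes "f \<in> C" "k < l"
  shows "ev k f \<in> Iset s l \<alpha> \<beta> \<omega> r C k"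
proof -
  have eta_f: "red s l \<alpha> \<beta> (ypoly (eta \<omega> r l k) * f) \<in> C"
    using ideal assms(1) ypoly_in_Rset[OF degree_eta[OF assms(2)] s_pos]
    unfolding is_R_ideal_def by blast
  have "red s l \<alpha> \<beta> (ypoly (eta \<omega> r l k) * xpoly (ev k f)) =
      red s l \<alpha> \<beta> (ypoly (eta \<omega> r l k) * f)"
  proof (rule Rset_eqI_ev[OF red_in_Rset[OF l_pos s_pos] red_in_Rset[OF l_pos s_pos]])
    fix k' assume "k' < l"
    then show "ev k' (red s l \<alpha> \<beta> (ypoly (eta \<omega> r l k) * xpoly (ev k f))) =
        ev k' (red s l \<alpha> \<beta> (ypoly (eta \<omega> r l k) * f))"
      using ev_eta[OF assms(2) \<open>k' < l\<close>]
      by (cases "k = k'") (simp_all add: ev_red eval_y_mult eval_y_xpoly eval_y_mod)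
  qed
  then show ?thesis
    using eta_f unfolding Iset_def eval_y_def by (simp add: degree_mod_xmod s_pos)
qed

lemma p_dvd_ev:
  assumes "f \<in> C" "k < l"
  shows "p k dvd ev k f"
proof -
  obtain g where "ev k f = (g * p k) mod xmod s \<alpha>"
    using ev_in_Iset[OF assms] Iset_eq[OF assms(2)] by blast
  then show ?thesis
    by (simp add: dvd_mod p_dvd[OF assms(2)])
qed

lemma coeff_ev_div_p:
  assumes "f \<in> C" "k < l" "s - degree (p k) \<le> i"
  shows "coeff (ev k f div p k) i = 0"
proof -
  obtain q where q: "ev k f = p k * q"
    using p_dvd_ev[OF assms(1,2)] by (rule dvdE)
  have "degree (p k * q) < s"
    unfolding q[symmetric] eval_y_def by (rule degree_mod_xmod[OF s_pos])
  have "coeff q i = 0"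
  proof (cases "q = 0")
    case False
    then have "degree q < i"
      using \<open>degree (p k * q) < s\<close> assms(3) p_nonzero[OF assms(2)] by (simp add: degree_mult_eq)
    then show ?thesis
      by (rule coeff_eq_0)
  qed simp
  then show ?thesis
    using q p_nonzero[OF assms(2)] by simp
qed

lemma basis_spanning:
  assumes "f \<in> C"
  shows "\<exists>c. f = (\<Sum>ji\<in>basis_idx. smult [:c ji:] (basis ji))"
proof -
  define c where "c = (\<lambda>(j, i). coeff (ev j f div p j) i)"
  have "f = (\<Sum>ji\<in>basis_idx. smult [:c ji:] (basis ji))"
  proof (rule Rset_eqI_ev)
    show "f \<in> Rset s l"
      using ideal assms unfolding is_R_ideal_def by auto
    show "(\<Sum>ji\<in>basis_idx. smult [:c ji:] (basis ji)) \<in> Rset s l"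
      using l_pos s_pos by (intro Rset_sum Rset_smult_const) (auto simp: basis_def red_in_Rset)
    show "ev k f = ev k (\<Sum>ji\<in>basis_idx. smult [:c ji:] (basis ji))" if "k < l" for k
    proof -
      have "(\<Sum>i<s - degree (p k). monom (c (k, i)) i) = ev k f div p k"
        unfolding c_def using coeff_ev_div_p[OF assms that] by (simp add: poly_eq_sum_monom)
      then show ?thesis
        using p_dvd_ev[OF assms that] by (simp add: ev_basis_combination[OF that])
    qed
  qed
  then show ?thesis by blast
qed

end

theorem theorem2:
  fixes \<alpha> \<beta> \<omega> :: "'a::{finite,field}"
    and s l r :: nat
    and C :: "'a poly poly set"
    and p :: "nat \<Rightarrow> 'a poly"
  assumes "0 < s" and "0 < l"
    and "\<alpha> \<noteq> 0" and "\<beta> \<noteq> 0"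
    and "r = mult_order \<beta>"
    and "CARD('a) mod (r * l) = 1 mod (r * l)"
    and "primitive_root_of_unity (r * l) \<omega>" and "\<omega> ^ l = \<beta>"
    and "is_R_ideal s l \<alpha> \<beta> C"
    and "\<forall>j<l. lead_coeff (p j) = 1 \<and> p j dvd xmod s \<alpha> \<and>
           Iset s l \<alpha> \<beta> \<omega> r C j = {(g * p j) mod xmod s \<alpha> | g. True}"
  shows "let b = (\<lambda>(j, i). red s l \<alpha> \<beta> (xpoly (monom 1 i * p j) * ypoly (eta \<omega> r l j)));
             Idx = {(j, i). j < l \<and> i < s - degree (p j)}
         in (\<forall>ji\<in>Idx. b ji \<in> C)
          \<and> (\<forall>c :: nat \<times> nat \<Rightarrow> 'a. (\<Sum>ji\<in>Idx. smult [:c ji:] (b ji)) = 0 \<longrightarrow> (\<forall>ji\<in>Idx. c ji = 0))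
          \<and> (\<forall>f\<in>C. \<exists>c :: nat \<times> nat \<Rightarrow> 'a. f = (\<Sum>ji\<in>Idx. smult [:c ji:] (b ji)))"
proof -
  have "0 < r"
    using mult_order_pos[OF assms(4)] assms(5) by simp
  then interpret constacyclic_ideal s l r \<alpha> \<beta> \<omega> C p
    using assms(1,2,7-10) by unfold_locales auto
  show ?thesis
    unfolding Let_def basis_def[symmetric] basis_idx_def[symmetric]
    using basis_in_ideal basis_independent basis_spanning by (intro conjI ballI allI impI) auto
qed

end
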